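(* Let $L>0$, $U\in\mathbb{R}$, and let $\zeta,f:(-1,\infty)\to\mathbb{R}$ be smooth functions. Let $B$ be a smooth real function on $(\mathbb{R}/L\mathbb{Z})\times I$ ($I$ an open interval) with $1+B_s>0$, satisfying $$\big(B_{ttss}-B_{ssss}+\zeta(B_s)\,B_{ss}+\partial_s f(B_s)\big)(1+B_s)-B_{tt}+\partial_s\frac{(B_t-U)^2}{1+B_s}=0 .$$ Then $$I(t)=\int_0^L\big(B_t+B_{ss}B_{ts}\big)\,\mathrm{d}s$$ is independent of $t\in I$.
   Context: Subscripts denote partial derivatives in $s$ (coordinate along the tube) and $t$ (time). $B$ is the deviation of the back-to-labels map from a uniform flow with velocity $U$, and $a=B_s$ is the relative deviation of the cross-sectional area from equilibrium. The equation is the nondimensionalized equation of motion for a straight expandable tube conveying fluid with constant swirl; $\zeta$ combines wall stiffness and swirl, and $f$ is the derivative of the nonlinear part of the wall elastic energy. Periodic boundary conditions in $s$ are assumed. *)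

theory Defs
  imports "HOL-Analysis.Analysis"
begin

definition ds :: "(real \<times> real \<Rightarrow> real) \<Rightarrow> real \<times> real \<Rightarrow> real" where
  "ds F = (\<lambda>(s,t). deriv (\<lambda>\<sigma>. F (\<sigma>, t)) s)"

definition dt :: "(real \<times> real \<Rightarrow> real) \<Rightarrow> real \<times> real \<Rightarrow> real" where
  "dt F = (\<lambda>(s,t). deriv (\<lambda>\<tau>. F (s, \<tau>)) t)"

fun pd :: "bool list \<Rightarrow> (real \<times> real \<Rightarrow> real) \<Rightarrow> real \<times> real \<Rightarrow> real" where
  "pd [] F = F"
| "pd (b # bs) F = (if b then ds else dt) (pd bs F)"

definition smooth2_on :: "(real \<times> real) set \<Rightarrow> (real \<times> real \<Rightarrow> real) \<Rightarrow> bool" where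
  "smooth2_on S F \<longleftrightarrow> (\<forall>bs. pd bs F differentiable_on S)"

definition smooth1_on :: "real set \<Rightarrow> (real \<Rightarrow> real) \<Rightarrow> bool" where
  "smooth1_on S g \<longleftrightarrow> (\<forall>n. (deriv ^^ n) g differentiable_on S)"

end

theory Submission
  imports Defs
begin

text \<open>Differentiating under the integral sign, \<open>I'(t)\<close> is the integral over one period of
  \<open>B\<^sub>t\<^sub>t + B\<^sub>s\<^sub>s\<^sub>t B\<^sub>t\<^sub>s + B\<^sub>s\<^sub>s B\<^sub>t\<^sub>t\<^sub>s\<close>.
  Solving the equation of motion for \<open>B\<^sub>t\<^sub>t\<close> and commuting mixed partials turns this
  integrand into the \<open>s\<close>-derivative of the flux
  \<open>(B\<^sub>s\<^sub>t\<^sub>t - B\<^sub>s\<^sub>s\<^sub>s)(1 + B\<^sub>s) + (B\<^sub>s\<^sub>s\<^sup>2 + B\<^sub>s\<^sub>t\<^sup>2)/2 + (B\<^sub>t - U)\<^sup>2/(1 + B\<^sub>s) + G(B\<^sub>s)\<close>,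
  where \<open>G\<close> is a primitive of \<open>(\<zeta>(a) + f'(a))(1 + a)\<close> on \<open>a > -1\<close>. The flux is
  \<open>L\<close>-periodic in \<open>s\<close>, so its integral vanishes and \<open>I\<close> is constant on the interval.\<close>

lemma pd_pd: "pd bs (pd cs F) = pd (bs @ cs) F"
  by (induction bs) auto

lemma smooth2_on_pd: "smooth2_on S F \<Longrightarrow> smooth2_on S (pd bs F)"
  by (simp add: smooth2_on_def pd_pd)

lemma smooth2_on_ds: "smooth2_on S F \<Longrightarrow> smooth2_on S (ds F)"
  using smooth2_on_pd[of S F "[True]"] by simp

lemma smooth2_on_dt: "smooth2_on S F \<Longrightarrow> smooth2_on S (dt F)"
  using smooth2_on_pd[of S F "[False]"] by simp

lemma smooth2_on_continuous_on: "smooth2_on S F \<Longrightarrow> continuous_on S F"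
  using differentiable_imp_continuous_on pd.simps(1) unfolding smooth2_on_def by metis

lemma smooth2_on_differentiable_at:
  "smooth2_on S F \<Longrightarrow> open S \<Longrightarrow> p \<in> S \<Longrightarrow> F differentiable at p"
  using differentiable_on_eq_differentiable_at pd.simps(1) unfolding smooth2_on_def by metis

lemma ds_has_real_derivative:
  "(\<lambda>\<sigma>. F (\<sigma>, t)) differentiable at s \<Longrightarrow> ((\<lambda>\<sigma>. F (\<sigma>, t)) has_real_derivative ds F (s, t)) (at s)"
  by (simp add: ds_def DERIV_deriv_iff_real_differentiable)

lemma dt_has_real_derivative:
  "(\<lambda>\<tau>. F (s, \<tau>)) differentiable at t \<Longrightarrow> ((\<lambda>\<tau>. F (s, \<tau>)) has_real_derivative dt F (s, t)) (at t)"
  by (simp add: dt_def DERIV_deriv_iff_real_differentiable)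

lemma smooth2_on_has_derivative_ds:
  assumes "smooth2_on S F" "open S" "(s, t) \<in> S"
  shows "((\<lambda>\<sigma>. F (\<sigma>, t)) has_real_derivative ds F (s, t)) (at s)"
proof (rule ds_has_real_derivative)
  have "(\<lambda>\<sigma>. (\<sigma>, t)) differentiable at s" by (auto intro!: derivative_intros)
  with smooth2_on_differentiable_at[OF assms] show "(\<lambda>\<sigma>. F (\<sigma>, t)) differentiable at s"
    using differentiable_chain_at[of "\<lambda>\<sigma>. (\<sigma>, t)" s F] by (simp add: o_def)
qed

lemma smooth2_on_has_derivative_dt:
  assumes "smooth2_on S F" "open S" "(s, t) \<in> S"
  shows "((\<lambda>\<tau>. F (s, \<tau>)) has_real_derivative dt F (s, t)) (at t)"
proof (rule dt_has_real_derivative)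
  have "(\<lambda>\<tau>. (s, \<tau>)) differentiable at t" by (auto intro!: derivative_intros)
  with smooth2_on_differentiable_at[OF assms] show "(\<lambda>\<tau>. F (s, \<tau>)) differentiable at t"
    using differentiable_chain_at[of "\<lambda>\<tau>. (s, \<tau>)" t F] by (simp add: o_def)
qed

lemma continuous_on_slice:
  "continuous_on (UNIV \<times> I) F \<Longrightarrow> \<tau> \<in> I \<Longrightarrow> continuous_on A (\<lambda>x. F (x, \<tau>))"
  by (rule continuous_on_compose2[where f="\<lambda>x. (x, \<tau>)"]) (auto intro!: continuous_intros)

lemma has_real_derivative_integral_parameter:
  fixes a b :: real
  assumes I: "open I" "t \<in> I"
    and F': "\<And>x \<tau>. x \<in> {a..b} \<Longrightarrow> \<tau> \<in> I \<Longrightarrow> ((\<lambda>\<tau>. F x \<tau>) has_real_derivative F' x \<tau>) (at \<tau>)"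
    and int: "\<And>\<tau>. \<tau> \<in> I \<Longrightarrow> (\<lambda>x. F x \<tau>) integrable_on {a..b}"
    and cont: "continuous_on ({a..b} \<times> I) (\<lambda>(x, \<tau>). F' x \<tau>)"
  shows "((\<lambda>\<tau>. integral {a..b} (\<lambda>x. F x \<tau>)) has_real_derivative integral {a..b} (\<lambda>x. F' x t)) (at t)"
proof -
  obtain r where r: "r > 0" "ball t r \<subseteq> I" using I openE by blast
  have "prod.swap ` (ball t r \<times> cbox a b) \<subseteq> {a..b} \<times> I" using r by (auto simp: cbox_interval)
  then have cont': "continuous_on (ball t r \<times> cbox a b) (\<lambda>(\<tau>, x). F' x \<tau>)"
    using continuous_on_compose2[OF cont continuous_on_swap] by (simp add: case_prod_unfold)
  have "((\<lambda>\<tau>. integral (cbox a b) (\<lambda>x. F x \<tau>)) has_field_derivative integral (cbox a b) (\<lambda>x. F' x t))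
      (at t within ball t r)"
  proof (rule leibniz_rule_field_derivative[where f="\<lambda>\<tau> x. F x \<tau>" and fx="\<lambda>\<tau> x. F' x \<tau>"])
    fix \<tau> x assume "\<tau> \<in> ball t r" "x \<in> cbox a b"
    then have "x \<in> {a..b}" "\<tau> \<in> I" using r by (auto simp: cbox_interval)
    then show "((\<lambda>\<tau>. F x \<tau>) has_field_derivative F' x \<tau>) (at \<tau> within ball t r)"
      by (rule has_field_derivative_at_within[OF F'])
  next
    show "(\<lambda>x. F x \<tau>) integrable_on cbox a b" if "\<tau> \<in> ball t r" for \<tau>
      using int r that by (auto simp: cbox_interval)
  next
    show "continuous_on (ball t r \<times> cbox a b) (\<lambda>(\<tau>, x). F' x \<tau>)" by (fact cont')
  qed (use r in simp_all)
  moreover have "at t within ball t r = at t" using r by (intro at_within_open) auto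
  ultimately show ?thesis by (simp only: cbox_interval)
qed

text \<open>Schwarz's theorem, via differentiating
  \<open>F(\<sigma>, t) - F(a, t) = \<integral>\<^sub>a\<^sup>\<sigma> F\<^sub>s(x, t) dx\<close> in \<open>t\<close> and then in \<open>\<sigma>\<close>.\<close>

lemma ds_dt_eq_dt_ds:
  assumes sm: "smooth2_on (UNIV \<times> I) F" and I: "open I" "t \<in> I"
  shows "ds (dt F) (s, t) = dt (ds F) (s, t)"
proof -
  define a where "a = s - 1"
  have oS: "open (UNIV \<times> I)" using I by (simp add: open_Times)
  have H_cont: "continuous_on (UNIV \<times> I) (dt (ds F))"
    by (intro smooth2_on_continuous_on smooth2_on_dt smooth2_on_ds sm)
  have dtF: "dt F (\<sigma>, t) = dt F (a, t) + integral {a..\<sigma>} (\<lambda>x. dt (ds F) (x, t))" if "a \<le> \<sigma>" for \<sigma>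
  proof -
    have FTC: "F (\<sigma>, \<tau>) - F (a, \<tau>) = integral {a..\<sigma>} (\<lambda>x. ds F (x, \<tau>))" if "\<tau> \<in> I" for \<tau>
      using \<open>a \<le> \<sigma>\<close> smooth2_on_has_derivative_ds[OF sm oS] that
      by (intro integral_unique[symmetric] fundamental_theorem_of_calculus)
         (auto simp: has_real_derivative_iff_has_vector_derivative intro: has_vector_derivative_at_within)
    have ev: "\<forall>\<^sub>F \<tau> in nhds t. F (\<sigma>, \<tau>) - F (a, \<tau>) = integral {a..\<sigma>} (\<lambda>x. ds F (x, \<tau>))"
      using eventually_nhds_in_open[OF I] by (auto elim!: eventually_mono simp: FTC)
    have "((\<lambda>\<tau>. integral {a..\<sigma>} (\<lambda>x. ds F (x, \<tau>))) has_real_derivative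
        integral {a..\<sigma>} (\<lambda>x. dt (ds F) (x, t))) (at t)"
      using I
    proof (rule has_real_derivative_integral_parameter)
      show "((\<lambda>\<tau>. ds F (x, \<tau>)) has_real_derivative dt (ds F) (x, \<tau>)) (at \<tau>)" if "\<tau> \<in> I" for x \<tau>
        using smooth2_on_has_derivative_dt[OF smooth2_on_ds[OF sm] oS] that by simp
      show "(\<lambda>x. ds F (x, \<tau>)) integrable_on {a..\<sigma>}" if "\<tau> \<in> I" for \<tau>
        using continuous_on_slice[OF smooth2_on_continuous_on[OF smooth2_on_ds[OF sm]] that]
        by (rule integrable_continuous_real)
      show "continuous_on ({a..\<sigma>} \<times> I) (\<lambda>(x, \<tau>). dt (ds F) (x, \<tau>))"
        using continuous_on_subset[OF H_cont] by (simp add: Sigma_mono)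
    qed
    then have "((\<lambda>\<tau>. F (\<sigma>, \<tau>) - F (a, \<tau>)) has_real_derivative
        integral {a..\<sigma>} (\<lambda>x. dt (ds F) (x, t))) (at t)"
      by (rule DERIV_cong_ev[OF refl ev refl, THEN iffD2])
    moreover have "((\<lambda>\<tau>. F (\<sigma>, \<tau>) - F (a, \<tau>)) has_real_derivative dt F (\<sigma>, t) - dt F (a, t)) (at t)"
      using I by (intro DERIV_diff smooth2_on_has_derivative_dt[OF sm oS]) auto
    ultimately have "integral {a..\<sigma>} (\<lambda>x. dt (ds F) (x, t)) = dt F (\<sigma>, t) - dt F (a, t)"
      by (rule DERIV_unique)
    then show ?thesis by simp
  qed
  have "((\<lambda>\<sigma>. integral {a..\<sigma>} (\<lambda>x. dt (ds F) (x, t))) has_real_derivative dt (ds F) (s, t))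
      (at s within {a..s + 1})"
    using continuous_on_slice[OF H_cont I(2)] by (rule integral_has_real_derivative) (simp add: a_def)
  then have int_deriv: "((\<lambda>\<sigma>. dt F (a, t) + integral {a..\<sigma>} (\<lambda>x. dt (ds F) (x, t))) has_real_derivative
      dt (ds F) (s, t)) (at s)"
    using at_within_interior[of s "{a..s + 1}"] by (auto simp: a_def intro!: derivative_eq_intros)
  have ev: "\<forall>\<^sub>F \<sigma> in nhds s. dt F (\<sigma>, t) = dt F (a, t) + integral {a..\<sigma>} (\<lambda>x. dt (ds F) (x, t))"
    using eventually_nhds_in_open[of "{a<..}" s]
    by (simp add: a_def) (auto elim!: eventually_mono intro!: dtF[unfolded a_def])
  have "((\<lambda>\<sigma>. dt F (\<sigma>, t)) has_real_derivative dt (ds F) (s, t)) (at s)"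
    using int_deriv by (rule DERIV_cong_ev[OF refl ev refl, THEN iffD2])
  moreover have "((\<lambda>\<sigma>. dt F (\<sigma>, t)) has_real_derivative ds (dt F) (s, t)) (at s)"
    using smooth2_on_has_derivative_ds[OF smooth2_on_dt[OF sm] oS] I by simp
  ultimately show ?thesis by (rule DERIV_unique[rotated])
qed

lemma pd_periodic:
  assumes I: "open I" and per: "\<And>s t. t \<in> I \<Longrightarrow> B (s + L, t) = B (s, t)"
  shows "t \<in> I \<Longrightarrow> pd bs B (s + L, t) = pd bs B (s, t)"
proof (induction bs arbitrary: s t)
  case Nil
  then show ?case using per by simp
next
  case (Cons b bs)
  show ?case
  proof (cases b)
    case True
    have "deriv (\<lambda>\<sigma>. pd bs B (\<sigma>, t)) (s + L) = deriv (\<lambda>\<sigma>. pd bs B (\<sigma> + L, t)) s"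
      unfolding deriv_def using DERIV_shift[of "\<lambda>\<sigma>. pd bs B (\<sigma>, t)" _ s L] by simp
    also have "\<dots> = deriv (\<lambda>\<sigma>. pd bs B (\<sigma>, t)) s" using Cons by simp
    finally show ?thesis using True by (simp add: ds_def)
  next
    case False
    have "\<forall>\<^sub>F \<tau> in nhds t. pd bs B (s + L, \<tau>) = pd bs B (s, \<tau>)"
      using eventually_nhds_in_open[OF I Cons.prems] by (rule eventually_mono) (rule Cons.IH)
    then have "deriv (\<lambda>\<tau>. pd bs B (s + L, \<tau>)) t = deriv (\<lambda>\<tau>. pd bs B (s, \<tau>)) t"
      by (rule deriv_cong_ev) simp
    then show ?thesis using False by (simp add: dt_def)
  qed
qed

definition convective_flux :: "real \<Rightarrow> (real \<times> real \<Rightarrow> real) \<Rightarrow> real \<times> real \<Rightarrow> real" where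
  "convective_flux U B = (\<lambda>p. (dt B p - U)\<^sup>2 / (1 + ds B p))"

definition tube_equation ::
    "(real \<Rightarrow> real) \<Rightarrow> (real \<Rightarrow> real) \<Rightarrow> real \<Rightarrow> (real \<times> real \<Rightarrow> real) \<Rightarrow> real \<times> real \<Rightarrow> bool" where
  "tube_equation \<zeta> f U B p \<longleftrightarrow>
    (ds (ds (dt (dt B))) p - ds (ds (ds (ds B))) p + \<zeta> (ds B p) * ds (ds B) p
      + ds (\<lambda>q. f (ds B q)) p) * (1 + ds B p)
    - dt (dt B) p + ds (convective_flux U B) p = 0"

definition flux :: "real \<Rightarrow> (real \<Rightarrow> real) \<Rightarrow> (real \<times> real \<Rightarrow> real) \<Rightarrow> real \<times> real \<Rightarrow> real" where
  "flux U G B p = (ds (dt (dt B)) p - ds (ds (ds B)) p) * (1 + ds B p)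
     + ((ds (ds B) p)\<^sup>2 + (ds (dt B) p)\<^sup>2) / 2 + convective_flux U B p + G (ds B p)"

lemma flux_periodic:
  assumes "open I" "\<And>s t. t \<in> I \<Longrightarrow> B (s + L, t) = B (s, t)" "t \<in> I"
  shows "flux U G B (s + L, t) = flux U G B (s, t)"
proof -
  have P: "pd bs B (s + L, t) = pd bs B (s, t)" for bs
    using pd_periodic[OF assms] .
  show ?thesis
    using P[of "[True,False,False]"] P[of "[True,True,True]"] P[of "[True,True]"]
      P[of "[True,False]"] P[of "[True]"] P[of "[False]"]
    unfolding flux_def convective_flux_def by (simp only: pd.simps if_True if_False)
qed

lemma ds_cong_slice: "(\<And>\<sigma>. F (\<sigma>, t) = H (\<sigma>, t)) \<Longrightarrow> ds F (s, t) = ds H (s, t)"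
  by (simp add: ds_def)

lemma has_real_derivative_flux:
  assumes sm: "smooth2_on (UNIV \<times> I) B" and I: "open I" "t \<in> I"
    and area: "1 + ds B (x, t) > 0"
    and f: "f differentiable at (ds B (x, t))"
    and G: "(G has_real_derivative (\<zeta> (ds B (x, t)) + deriv f (ds B (x, t))) * (1 + ds B (x, t)))
      (at (ds B (x, t)))"
    and eq: "tube_equation \<zeta> f U B (x, t)"
  shows "((\<lambda>\<sigma>. flux U G B (\<sigma>, t)) has_real_derivative
      dt (dt B) (x, t) + dt (ds (ds B)) (x, t) * ds (dt B) (x, t) + ds (ds B) (x, t) * dt (ds (dt B)) (x, t))
    (at x)"
proof -
  have oS: "open (UNIV \<times> I)" using I by (simp add: open_Times)
  have D: "((\<lambda>\<sigma>. pd bs B (\<sigma>, t)) has_real_derivative ds (pd bs B) (x, t)) (at x)" for bs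
    using smooth2_on_has_derivative_ds[OF smooth2_on_pd[OF sm] oS] I by simp
  note D1 = D[of "[True]", simplified] and D2 = D[of "[True,True]", simplified]
    and D3 = D[of "[True,True,True]", simplified] and Dt = D[of "[False]", simplified]
    and Dst = D[of "[True,False]", simplified] and Dstt = D[of "[True,False,False]", simplified]
  have Dconv: "((\<lambda>\<sigma>. convective_flux U B (\<sigma>, t)) has_real_derivative ds (convective_flux U B) (x, t)) (at x)"
  proof (rule ds_has_real_derivative)
    show "(\<lambda>\<sigma>. convective_flux U B (\<sigma>, t)) differentiable at x"
      unfolding convective_flux_def real_differentiable_def
      using area by (intro exI) (rule derivative_eq_intros Dt D1 refl | simp)+
  qed
  have DG: "((\<lambda>\<sigma>. G (ds B (\<sigma>, t))) has_real_derivative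
      (\<zeta> (ds B (x, t)) + deriv f (ds B (x, t))) * (1 + ds B (x, t)) * ds (ds B) (x, t)) (at x)"
    by (rule DERIV_chain2[OF G D1])
  have Df: "ds (\<lambda>p. f (ds B p)) (x, t) = deriv f (ds B (x, t)) * ds (ds B) (x, t)"
  proof -
    have "((\<lambda>\<sigma>. f (ds B (\<sigma>, t))) has_real_derivative deriv f (ds B (x, t)) * ds (ds B) (x, t)) (at x)"
      using f by (intro DERIV_chain2[OF _ D1]) (simp add: DERIV_deriv_iff_real_differentiable)
    then show ?thesis by (simp add: ds_def DERIV_imp_deriv)
  qed
  have swap_sst: "dt (ds (ds B)) (x, t) = ds (ds (dt B)) (x, t)"
    using ds_dt_eq_dt_ds[OF smooth2_on_ds[OF sm] I] ds_dt_eq_dt_ds[OF sm I]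
    by (simp add: ds_cong_slice[of "dt (ds B)" t "ds (dt B)"])
  have swap_stt: "dt (ds (dt B)) (x, t) = ds (dt (dt B)) (x, t)"
    using ds_dt_eq_dt_ds[OF smooth2_on_dt[OF sm] I] by simp
  have "((\<lambda>\<sigma>. flux U G B (\<sigma>, t)) has_real_derivative
      (ds (ds (dt (dt B))) (x, t) - ds (ds (ds (ds B))) (x, t)) * (1 + ds B (x, t))
      + ds (dt (dt B)) (x, t) * ds (ds B) (x, t) + ds (dt B) (x, t) * ds (ds (dt B)) (x, t)
      + ds (convective_flux U B) (x, t)
      + (\<zeta> (ds B (x, t)) + deriv f (ds B (x, t))) * (1 + ds B (x, t)) * ds (ds B) (x, t)) (at x)"
    unfolding flux_def
    by (rule derivative_eq_intros D1 D2 D3 Dt Dst Dstt Dconv DG refl | simp)+ (simp add: algebra_simps)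
  moreover have "dt (dt B) (x, t) + dt (ds (ds B)) (x, t) * ds (dt B) (x, t)
      + ds (ds B) (x, t) * dt (ds (dt B)) (x, t) =
    (ds (ds (dt (dt B))) (x, t) - ds (ds (ds (ds B))) (x, t)) * (1 + ds B (x, t))
      + ds (dt (dt B)) (x, t) * ds (ds B) (x, t) + ds (dt B) (x, t) * ds (ds (dt B)) (x, t)
      + ds (convective_flux U B) (x, t)
      + (\<zeta> (ds B (x, t)) + deriv f (ds B (x, t))) * (1 + ds B (x, t)) * ds (ds B) (x, t)"
    using eq unfolding tube_equation_def Df swap_sst swap_stt by (simp add: algebra_simps)
  ultimately show ?thesis by simp
qed

lemma integral_dt_density_eq_0:
  fixes L :: real
  assumes L: "0 \<le> L" and sm: "smooth2_on (UNIV \<times> I) B" and I: "open I" "t \<in> I"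
    and per: "\<And>s t. t \<in> I \<Longrightarrow> B (s + L, t) = B (s, t)"
    and area: "\<And>s. 1 + ds B (s, t) > 0"
    and f: "\<And>y. y > -1 \<Longrightarrow> f differentiable at y"
    and G: "\<And>y. y > -1 \<Longrightarrow> (G has_real_derivative (\<zeta> y + deriv f y) * (1 + y)) (at y)"
    and eq: "\<And>s. tube_equation \<zeta> f U B (s, t)"
  shows "integral {0..L} (\<lambda>s. dt (dt B) (s, t) + dt (ds (ds B)) (s, t) * ds (dt B) (s, t)
      + ds (ds B) (s, t) * dt (ds (dt B)) (s, t)) = 0"
proof -
  have "((\<lambda>s. dt (dt B) (s, t) + dt (ds (ds B)) (s, t) * ds (dt B) (s, t)
      + ds (ds B) (s, t) * dt (ds (dt B)) (s, t)) has_integral flux U G B (L, t) - flux U G B (0, t)) {0..L}"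
  proof (rule fundamental_theorem_of_calculus[OF L])
    fix x
    have "-1 < ds B (x, t)" using area[of x] by simp
    then have "((\<lambda>\<sigma>. flux U G B (\<sigma>, t)) has_real_derivative dt (dt B) (x, t)
        + dt (ds (ds B)) (x, t) * ds (dt B) (x, t) + ds (ds B) (x, t) * dt (ds (dt B)) (x, t)) (at x)"
      by (intro has_real_derivative_flux[OF sm I area f G eq])
    then show "((\<lambda>\<sigma>. flux U G B (\<sigma>, t)) has_vector_derivative dt (dt B) (x, t)
        + dt (ds (ds B)) (x, t) * ds (dt B) (x, t) + ds (ds B) (x, t) * dt (ds (dt B)) (x, t))
      (at x within {0..L})"
      by (simp add: has_real_derivative_iff_has_vector_derivative has_vector_derivative_at_within)
  qed
  moreover have "flux U G B (L, t) = flux U G B (0, t)"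
    using flux_periodic[OF I(1) per I(2), of U G 0] by simp
  ultimately show ?thesis by (simp add: integral_unique)
qed

lemma has_real_derivative_integral_density:
  fixes a b :: real
  assumes sm: "smooth2_on (UNIV \<times> I) B" and I: "open I" "t \<in> I"
  shows "((\<lambda>\<tau>. integral {a..b} (\<lambda>s. dt B (s, \<tau>) + ds (ds B) (s, \<tau>) * ds (dt B) (s, \<tau>)))
    has_real_derivative integral {a..b} (\<lambda>s. dt (dt B) (s, t) + dt (ds (ds B)) (s, t) * ds (dt B) (s, t)
      + ds (ds B) (s, t) * dt (ds (dt B)) (s, t))) (at t)"
  using I
proof (rule has_real_derivative_integral_parameter)
  have oS: "open (UNIV \<times> I)" using I by (simp add: open_Times)
  have C: "continuous_on (UNIV \<times> I) (pd bs B)" for bs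
    by (intro smooth2_on_continuous_on smooth2_on_pd sm)
  show "((\<lambda>\<tau>. dt B (s, \<tau>) + ds (ds B) (s, \<tau>) * ds (dt B) (s, \<tau>)) has_real_derivative
      dt (dt B) (s, \<tau>) + dt (ds (ds B)) (s, \<tau>) * ds (dt B) (s, \<tau>) + ds (ds B) (s, \<tau>) * dt (ds (dt B)) (s, \<tau>))
    (at \<tau>)" if "\<tau> \<in> I" for s \<tau>
  proof -
    have D: "((\<lambda>\<tau>. pd bs B (s, \<tau>)) has_real_derivative dt (pd bs B) (s, \<tau>)) (at \<tau>)" for bs
      using smooth2_on_has_derivative_dt[OF smooth2_on_pd[OF sm] oS] that by simp
    show ?thesis
      using D[of "[False]"] D[of "[True,True]"] D[of "[True,False]"]
      by (auto intro!: derivative_eq_intros simp: algebra_simps)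
  qed
  show "(\<lambda>s. dt B (s, \<tau>) + ds (ds B) (s, \<tau>) * ds (dt B) (s, \<tau>)) integrable_on {a..b}" if "\<tau> \<in> I" for \<tau>
    using continuous_on_slice[OF C[of "[False]"] that] continuous_on_slice[OF C[of "[True,True]"] that]
      continuous_on_slice[OF C[of "[True,False]"] that]
    by (intro integrable_continuous_real continuous_intros) simp_all
  have "continuous_on ({a..b} \<times> I) (pd bs B)" for bs
    using C by (rule continuous_on_subset) auto
  from this[of "[False,False]"] this[of "[False,True,True]"] this[of "[True,False]"]
    this[of "[True,True]"] this[of "[False,True,False]"]
  show "continuous_on ({a..b} \<times> I) (\<lambda>(s, \<tau>). dt (dt B) (s, \<tau>) + dt (ds (ds B)) (s, \<tau>) * ds (dt B) (s, \<tau>)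
      + ds (ds B) (s, \<tau>) * dt (ds (dt B)) (s, \<tau>))"
    by (auto simp: split_beta intro!: continuous_intros)
qed

lemma exists_antiderivative_greaterThan:
  fixes g :: "real \<Rightarrow> real"
  assumes "continuous_on {a<..} g"
  obtains G where "\<And>y. y > a \<Longrightarrow> (G has_real_derivative g y) (at y)"
proof -
  have "\<exists>G. \<forall>y. ereal a < ereal y \<longrightarrow> ereal y < \<infinity> \<longrightarrow> (G has_vector_derivative g y) (at y)"
    using assms by (intro einterval_antiderivative) (auto simp: continuous_on_eq_continuous_at)
  then obtain G where "\<forall>y. ereal a < ereal y \<longrightarrow> ereal y < \<infinity> \<longrightarrow> (G has_vector_derivative g y) (at y)"
    by blast
  then show ?thesis
    by (intro that[of G]) (auto simp: has_real_derivative_iff_has_vector_derivative)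
qed

theorem mainTheorem4:
  fixes L U :: real and \<zeta> f :: "real \<Rightarrow> real"
    and B :: "real \<times> real \<Rightarrow> real" and I :: "real set"
  assumes L_pos: "L > 0"
    and zeta_smooth: "smooth1_on {-1<..} \<zeta>"
    and f_smooth: "smooth1_on {-1<..} f"
    and I_open: "open I" and I_interval: "is_interval I"
    and B_smooth: "smooth2_on (UNIV \<times> I) B"
    and B_periodic: "\<And>s t. t \<in> I \<Longrightarrow> B (s + L, t) = B (s, t)"
    and B_area: "\<And>s t. t \<in> I \<Longrightarrow> 1 + ds B (s, t) > 0"
    and B_eq: "\<And>s t. t \<in> I \<Longrightarrow>
        (ds (ds (dt (dt B))) (s, t) - ds (ds (ds (ds B))) (s, t)
          + \<zeta> (ds B (s, t)) * ds (ds B) (s, t)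
          + ds (\<lambda>p. f (ds B p)) (s, t)) * (1 + ds B (s, t))
        - dt (dt B) (s, t)
        + ds (\<lambda>p. (dt B p - U)\<^sup>2 / (1 + ds B p)) (s, t) = 0"
  shows "\<exists>c. \<forall>t\<in>I. integral {0..L} (\<lambda>s. dt B (s, t) + ds (ds B) (s, t) * ds (dt B) (s, t)) = c"
proof -
  have f_diff: "f differentiable at y" if "y > -1" for y
    using f_smooth that differentiable_on_eq_differentiable_at[of "{-1<..}" f]
    unfolding smooth1_on_def by (metis funpow_0 greaterThan_iff open_greaterThan)
  have "continuous_on {-1<..} \<zeta>" "continuous_on {-1<..} ((deriv ^^ 1) f)"
    using zeta_smooth f_smooth unfolding smooth1_on_def
    by (metis differentiable_imp_continuous_on funpow_0)+
  then have "continuous_on {-1<..} (\<lambda>y. (\<zeta> y + deriv f y) * (1 + y))"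
    by (auto intro!: continuous_intros)
  then obtain G where G: "\<And>y. y > -1 \<Longrightarrow> (G has_real_derivative (\<zeta> y + deriv f y) * (1 + y)) (at y)"
    using exists_antiderivative_greaterThan[of "-1"] by blast
  have eq: "tube_equation \<zeta> f U B (s, t)" if "t \<in> I" for s t
    using B_eq[OF that] unfolding tube_equation_def convective_flux_def .
  have "((\<lambda>t. integral {0..L} (\<lambda>s. dt B (s, t) + ds (ds B) (s, t) * ds (dt B) (s, t)))
      has_real_derivative 0) (at t within I)" if "t \<in> I" for t
    using has_real_derivative_integral_density[OF B_smooth I_open that, of 0 L]
      integral_dt_density_eq_0[OF _ B_smooth I_open that B_periodic B_area[OF that] f_diff G eq[OF that]]
      L_pos by (auto intro: has_field_derivative_at_within)
  then show ?thesis
    using has_field_derivative_zero_constant[OF is_interval_convex[OF I_interval]] by blast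
qed

end
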